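(* Let $d\ge 1$, $\eta>0$, $g\in\mathbb{R}^d$ and $p\in\mathbb{R}^d$ with $\eta p\in[-1,0]^d$. Define $\psi:\operatorname{dom}\psi\to\mathbb{R}$ by $$\psi(\lambda)=\lambda-\sum_{i=1}^d (1-\eta p(i))\log(\lambda+\eta g(i)),\qquad \operatorname{dom}\psi=\{\lambda\in\mathbb{R}:\lambda+\eta g(i)>0\ \forall i\in[d]\}.$$ Then $\psi$ has a unique minimizer $\lambda^\star\in\operatorname{dom}\psi$. Moreover, defining $x\in\mathbb{R}^d$ and $\hat g\in\mathbb{R}^d$ by $$x(i)=\frac{1-\eta p(i)}{\lambda^\star+\eta g(i)},\qquad \hat g(i)=p(i)\cdot\frac{\lambda^\star+\eta g(i)}{1-\eta p(i)},\qquad i\in[d],$$ we have $x\in\Delta$, $x\odot\hat g=p$, and $$x\in\operatorname*{argmin}_{y\in\Delta}\ \langle g,y\rangle+\langle\hat g,y\rangle+\eta^{-1}h(y).$$ In other words, the pair $(x,\hat g)$ solves the system of equations $x\odot \hat g = p$, $x\in\operatorname{argmin}_{y\in\Delta}\langle g+\hat g,y\rangle+\eta^{-1}h(y)$.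
   Context: $\Delta=\{x\in\mathbb{R}^d: x(i)\ge 0\ \forall i,\ \sum_{i=1}^d x(i)=1\}$ is the probability simplex. $h$ is the log-barrier $h(x)=-d\log d-\sum_{i=1}^d\log x(i)$ (equal to $+\infty$ if some $x(i)=0$). $\odot$ denotes the entrywise product of vectors. $[d]=\{1,\dots,d\}$. *)

theory Defs
  imports "HOL-Analysis.Analysis"
begin

text \<open>Vectors in R^d are functions on a finite index type 'n, with d = CARD('n).\<close>

definition prob_simplex :: "('n::finite \<Rightarrow> real) set" where
  "prob_simplex = {x. (\<forall>i. 0 \<le> x i) \<and> (\<Sum>i\<in>UNIV. x i) = 1}"

definition inner_vec :: "('n::finite \<Rightarrow> real) \<Rightarrow> ('n \<Rightarrow> real) \<Rightarrow> real" where
  "inner_vec u v = (\<Sum>i\<in>UNIV. u i * v i)"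

definition logbarrier :: "('n::finite \<Rightarrow> real) \<Rightarrow> ereal" where
  "logbarrier x = (if (\<forall>i. 0 < x i)
     then ereal (- real CARD('n) * ln (real CARD('n)) - (\<Sum>i\<in>UNIV. ln (x i)))
     else \<infinity>)"

definition psi :: "real \<Rightarrow> ('n::finite \<Rightarrow> real) \<Rightarrow> ('n \<Rightarrow> real) \<Rightarrow> real \<Rightarrow> real" where
  "psi \<eta> g p lam = lam - (\<Sum>i\<in>UNIV. (1 - \<eta> * p i) * ln (lam + \<eta> * g i))"

definition psi_dom :: "real \<Rightarrow> ('n::finite \<Rightarrow> real) \<Rightarrow> real set" where
  "psi_dom \<eta> g = {lam. \<forall>i. 0 < lam + \<eta> * g i}"

definition objective :: "real \<Rightarrow> ('n::finite \<Rightarrow> real) \<Rightarrow> ('n \<Rightarrow> real) \<Rightarrow> ('n \<Rightarrow> real) \<Rightarrow> ereal" where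
  "objective \<eta> g gh y = ereal (inner_vec g y + inner_vec gh y) + ereal (1 / \<eta>) * logbarrier y"

end

theory Submission
  imports Defs
begin

text \<open>
  For t > 0 the bound ln t \<le> t - 1, strict unless t = 1, controls everything. Applied to the
  ratios (\<mu> + \<eta> g i) / (\<lambda> + \<eta> g i) it shows that \<psi>(\<mu>) - \<psi>(\<lambda>) > (\<mu> - \<lambda>) (1 - \<Sum>i x(i)) for
  \<mu> \<noteq> \<lambda>, so a root \<lambda> of \<Sum>i x(i) = 1 (which exists by the intermediate value theorem) is the
  unique minimiser of \<psi>. At that root x lies in the simplex and \<eta> (g i + gh i) = 1 / x i - \<lambda>,
  the first-order condition for the convex problem on the simplex with multiplier \<lambda>; applied
  to y(i) / x(i), the same bound shows that x minimises the objective.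
\<close>

lemma exists_sum_div_eq_one:
  fixes a c :: "'n::finite \<Rightarrow> real"
  assumes a_pos: "\<And>i. 0 < a i"
  obtains L where "\<And>i. 0 < L + c i" "(\<Sum>i\<in>UNIV. a i / (L + c i)) = 1"
proof -
  define F where "F = (\<lambda>L. \<Sum>i\<in>UNIV. a i / (L + c i))"
  define m where "m = Min (range c)"
  have m_le: "\<And>i. m \<le> c i" unfolding m_def by (rule Min_le) auto
  have "m \<in> range c" unfolding m_def by (rule Min_in) auto
  then obtain j where cj: "c j = m" by auto
  define l1 where "l1 = a j - m"
  define l2 where "l2 = (\<Sum>i\<in>UNIV. a i) - m"
  have aj_le_sum: "a j \<le> (\<Sum>i\<in>UNIV. a i)"
    using a_pos by (intro member_le_sum) (auto simp: less_imp_le)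
  have denom_pos: "0 < L + c i" if "l1 \<le> L" for L i
    using that m_le[of i] a_pos[of j] by (simp add: l1_def)
  have F_l1: "1 \<le> F l1"
  proof -
    have "1 = a j / (l1 + c j)" using a_pos[of j] by (simp add: l1_def cj)
    also have "\<dots> \<le> F l1" unfolding F_def
      using a_pos denom_pos by (intro member_le_sum) (auto simp: less_imp_le)
    finally show ?thesis .
  qed
  have F_l2: "F l2 \<le> 1"
  proof -
    have "F l2 \<le> (\<Sum>i\<in>UNIV. a i / (\<Sum>k\<in>UNIV. a k))" unfolding F_def
    proof (rule sum_mono)
      fix i
      have "(\<Sum>k\<in>UNIV. a k) \<le> l2 + c i" using m_le[of i] by (simp add: l2_def)
      then show "a i / (l2 + c i) \<le> a i / (\<Sum>k\<in>UNIV. a k)"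
        using a_pos[of i] a_pos[of j] aj_le_sum by (intro divide_left_mono) auto
    qed
    also have "\<dots> = 1"
      using a_pos[of j] aj_le_sum by (simp add: sum_divide_distrib[symmetric])
    finally show ?thesis .
  qed
  have "\<forall>L. l1 \<le> L \<and> L \<le> l2 \<longrightarrow> isCont F L"
  proof (intro allI impI)
    fix L assume "l1 \<le> L \<and> L \<le> l2"
    then have "\<And>i. L + c i \<noteq> 0" using denom_pos by (metis less_irrefl)
    then show "isCont F L" unfolding F_def by (intro continuous_intros) auto
  qed
  moreover have "l1 \<le> l2" using aj_le_sum by (simp add: l1_def l2_def)
  ultimately obtain L where "l1 \<le> L" "F L = 1"
    using IVT2[of F l2 1 l1] F_l1 F_l2 by auto
  then show ?thesis using that denom_pos unfolding F_def by blast
qed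

lemma psi_less_at_root:
  fixes \<eta> :: real and g p :: "'n::finite \<Rightarrow> real"
  assumes weights_pos: "\<And>i. 0 < 1 - \<eta> * p i"
    and L: "L \<in> psi_dom \<eta> g" and root: "(\<Sum>i\<in>UNIV. (1 - \<eta> * p i) / (L + \<eta> * g i)) = 1"
    and \<mu>: "\<mu> \<in> psi_dom \<eta> g" and "\<mu> \<noteq> L"
  shows "psi \<eta> g p L < psi \<eta> g p \<mu>"
proof -
  have term_less: "(1 - \<eta> * p i) * ln (\<mu> + \<eta> * g i) - (1 - \<eta> * p i) * ln (L + \<eta> * g i)
      < (\<mu> - L) * ((1 - \<eta> * p i) / (L + \<eta> * g i))" for i
  proof -
    have "ln (\<mu> + \<eta> * g i) - ln (L + \<eta> * g i) < (\<mu> - L) / (L + \<eta> * g i)"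
      using L \<mu> \<open>\<mu> \<noteq> L\<close> ln_diff_less[of "\<mu> + \<eta> * g i" "L + \<eta> * g i"]
      by (auto simp: psi_dom_def)
    from mult_strict_left_mono[OF this weights_pos[of i]] show ?thesis
      by (simp add: algebra_simps)
  qed
  have "(\<Sum>i\<in>UNIV. (1 - \<eta> * p i) * ln (\<mu> + \<eta> * g i) - (1 - \<eta> * p i) * ln (L + \<eta> * g i))
      < (\<Sum>i\<in>UNIV. (\<mu> - L) * ((1 - \<eta> * p i) / (L + \<eta> * g i)))"
    using term_less by (intro sum_strict_mono) auto
  also have "\<dots> = (\<mu> - L) * (\<Sum>i\<in>UNIV. (1 - \<eta> * p i) / (L + \<eta> * g i))"
    by (rule sum_distrib_left[symmetric])
  also have "\<dots> = \<mu> - L" using root by simp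
  finally show ?thesis by (simp add: psi_def sum_subtractf)
qed

lemma psi_minimiser_iff_eq_root:
  fixes \<eta> :: real and g p :: "'n::finite \<Rightarrow> real"
  assumes weights_pos: "\<And>i. 0 < 1 - \<eta> * p i"
    and L: "L \<in> psi_dom \<eta> g" and root: "(\<Sum>i\<in>UNIV. (1 - \<eta> * p i) / (L + \<eta> * g i)) = 1"
  shows "lam \<in> psi_dom \<eta> g \<and> (\<forall>\<mu>\<in>psi_dom \<eta> g. psi \<eta> g p lam \<le> psi \<eta> g p \<mu>)
    \<longleftrightarrow> lam = L"
  using psi_less_at_root[OF weights_pos L root] L by (metis order.order_iff_strict not_le)

lemma objective_eq_scaled:
  fixes g gh y :: "'n::finite \<Rightarrow> real"
  assumes "0 < \<eta>" "\<And>i. 0 < y i"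
  shows "objective \<eta> g gh y = ereal (((\<Sum>i\<in>UNIV. \<eta> * (g i + gh i) * y i - ln (y i))
           - real CARD('n) * ln (real CARD('n))) / \<eta>)"
proof -
  have "(\<Sum>i\<in>UNIV. \<eta> * (g i + gh i) * y i - ln (y i))
      = \<eta> * (inner_vec g y + inner_vec gh y) - (\<Sum>i\<in>UNIV. ln (y i))"
    by (simp add: inner_vec_def sum_subtractf sum_distrib_left sum.distrib algebra_simps)
  then show ?thesis
    using assms by (simp add: objective_def logbarrier_def field_simps)
qed

text \<open>L is the Lagrange multiplier of the constraint \<Sum>i y(i) = 1.\<close>
lemma objective_minimal_at_stationary_point:
  fixes g gh x y :: "'n::finite \<Rightarrow> real"
  assumes "0 < \<eta>" and x_pos: "\<And>i. 0 < x i" and x_sum: "(\<Sum>i\<in>UNIV. x i) = 1"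
    and stationary: "\<And>i. \<eta> * (g i + gh i) = 1 / x i - L"
    and y: "y \<in> prob_simplex"
  shows "objective \<eta> g gh x \<le> objective \<eta> g gh y"
proof (cases "\<forall>i. 0 < y i")
  case False
  then have "logbarrier y = \<infinity>" by (simp add: logbarrier_def)
  then show ?thesis using \<open>0 < \<eta>\<close> by (simp add: objective_def)
next
  case True
  have y_sum: "(\<Sum>i\<in>UNIV. y i) = 1" using y by (simp add: prob_simplex_def)
  have scaled: "\<eta> * (g i + gh i) * z + L * z = z / x i" for i z
  proof -
    have "\<eta> * (g i + gh i) * z + L * z = (\<eta> * (g i + gh i) + L) * z" by (simp add: algebra_simps)
    then show ?thesis using stationary[of i] by simp
  qed
  have "(\<Sum>i\<in>UNIV. (\<eta> * (g i + gh i) * x i - ln (x i)) + L * x i)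
      \<le> (\<Sum>i\<in>UNIV. (\<eta> * (g i + gh i) * y i - ln (y i)) + L * y i)"
  proof (rule sum_mono)
    fix i
    have "ln (y i) - ln (x i) \<le> (y i - x i) / x i"
      using x_pos True by (intro ln_diff_le) auto
    then show "(\<eta> * (g i + gh i) * x i - ln (x i)) + L * x i
        \<le> (\<eta> * (g i + gh i) * y i - ln (y i)) + L * y i"
      using x_pos[of i] scaled[of i "x i"] scaled[of i "y i"] by (simp add: diff_divide_distrib)
  qed
  then have "(\<Sum>i\<in>UNIV. \<eta> * (g i + gh i) * x i - ln (x i))
      \<le> (\<Sum>i\<in>UNIV. \<eta> * (g i + gh i) * y i - ln (y i))"
    using x_sum y_sum by (simp add: sum.distrib sum_distrib_left[symmetric])
  then show ?thesis
    using \<open>0 < \<eta>\<close> x_pos True by (simp add: objective_eq_scaled divide_right_mono)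
qed

theorem mainTheorem1:
  fixes \<eta> :: real and g p :: "'n::finite \<Rightarrow> real"
  assumes "\<eta> > 0"
    and "\<forall>i. -1 \<le> \<eta> * p i \<and> \<eta> * p i \<le> 0"
  shows "(\<exists>!lam. lam \<in> psi_dom \<eta> g \<and> (\<forall>\<mu>\<in>psi_dom \<eta> g. psi \<eta> g p lam \<le> psi \<eta> g p \<mu>))
    \<and> (\<forall>lamS. lamS \<in> psi_dom \<eta> g \<and> (\<forall>\<mu>\<in>psi_dom \<eta> g. psi \<eta> g p lamS \<le> psi \<eta> g p \<mu>) \<longrightarrow>
        (let x = (\<lambda>i. (1 - \<eta> * p i) / (lamS + \<eta> * g i));
             gh = (\<lambda>i. p i * ((lamS + \<eta> * g i) / (1 - \<eta> * p i)))
         in x \<in> prob_simplex \<and> (\<forall>i. x i * gh i = p i) \<and>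
            (\<forall>y\<in>prob_simplex. objective \<eta> g gh x \<le> objective \<eta> g gh y)))"
proof -
  have weights_pos: "0 < 1 - \<eta> * p i" for i
    using assms(2)[rule_format, of i] by linarith
  obtain L where denom_pos: "\<And>i. 0 < L + \<eta> * g i"
    and root: "(\<Sum>i\<in>UNIV. (1 - \<eta> * p i) / (L + \<eta> * g i)) = 1"
    using exists_sum_div_eq_one[of "\<lambda>i. 1 - \<eta> * p i" "\<lambda>i. \<eta> * g i"] weights_pos by blast
  have L: "L \<in> psi_dom \<eta> g" using denom_pos by (simp add: psi_dom_def)
  note minimiser_iff = psi_minimiser_iff_eq_root[OF weights_pos L root]
  define x where "x = (\<lambda>i. (1 - \<eta> * p i) / (L + \<eta> * g i))"
  define gh where "gh = (\<lambda>i. p i * ((L + \<eta> * g i) / (1 - \<eta> * p i)))"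
  have x_pos: "\<And>i. 0 < x i" using denom_pos weights_pos by (simp add: x_def)
  have nonzero: "1 - \<eta> * p i \<noteq> 0" "L + \<eta> * g i \<noteq> 0" for i
    using denom_pos[of i] weights_pos[of i] by linarith+
  have stationary: "\<eta> * (g i + gh i) = 1 / x i - L" for i
    using nonzero[of i] by (simp add: x_def gh_def field_simps)
  have x_sum: "(\<Sum>i\<in>UNIV. x i) = 1" using root by (simp add: x_def)
  have "x \<in> prob_simplex" using x_pos x_sum by (simp add: prob_simplex_def less_imp_le)
  moreover have "\<forall>i. x i * gh i = p i" using nonzero by (simp add: x_def gh_def)
  moreover have "\<forall>y\<in>prob_simplex. objective \<eta> g gh x \<le> objective \<eta> g gh y"
    using objective_minimal_at_stationary_point[OF \<open>\<eta> > 0\<close> x_pos x_sum stationary] by blast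
  ultimately show ?thesis
    unfolding minimiser_iff Let_def x_def gh_def by simp
qed

end
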